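(* Let $I$ be a nearly complete intersection in $R=k[x_1,\dots,x_n]$, let $h$ be a minimal monomial generator of $I$ of degree at least $3$, and let $K$ be the ideal generated by the remaining minimal monomial generators of $I$, so $I=(h)+K$. Then $(h)\cap K=hJ$ for some ideal $J$ that is a complete intersection.
   Context: $k$ is a field. A nearly complete intersection is a squarefree monomial ideal $I$ that is not a complete intersection such that for every variable $x$ dividing some generator of $I$, the ideal $I(x=1)$ obtained by substituting $x=1$ in the generators is a complete intersection. *)

theory Defs
  imports "HOL-Library.Poly_Mapping"
begin

text \<open>The polynomial ring k[x_v : v in 'v] over a field k, with 'v a finite type of
  variables (so n = CARD('v)).\<close>

type_synonym ('v, 'k) mpoly = "('v \<Rightarrow>\<^sub>0 nat) \<Rightarrow>\<^sub>0 'k"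

definition monom :: "('v \<Rightarrow>\<^sub>0 nat) \<Rightarrow> ('v, 'k::field) mpoly" where
  "monom m = Poly_Mapping.single m 1"

definition mdeg :: "('v \<Rightarrow>\<^sub>0 nat) \<Rightarrow> nat" where
  "mdeg m = (\<Sum>v\<in>Poly_Mapping.keys m. Poly_Mapping.lookup m v)"

definition mdvd :: "('v \<Rightarrow>\<^sub>0 nat) \<Rightarrow> ('v \<Rightarrow>\<^sub>0 nat) \<Rightarrow> bool" where
  "mdvd a b = (\<forall>v. Poly_Mapping.lookup a v \<le> Poly_Mapping.lookup b v)"

definition gen_ideal :: "'a::comm_ring_1 set \<Rightarrow> 'a set" where
  "gen_ideal S = {f. \<exists>F r. finite F \<and> F \<subseteq> S \<and> f = (\<Sum>g\<in>F. r g * g)}"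

definition sqfree_monomial_ideal :: "('v, 'k::field) mpoly set \<Rightarrow> bool" where
  "sqfree_monomial_ideal I =
     (\<exists>G. (\<forall>m\<in>G. \<forall>v. Poly_Mapping.lookup m v \<le> 1) \<and> I = gen_ideal (monom ` G))"

definition mingens :: "('v, 'k::field) mpoly set \<Rightarrow> ('v \<Rightarrow>\<^sub>0 nat) set" where
  "mingens I = {m. monom m \<in> I \<and> (\<forall>m'. monom m' \<in> I \<and> mdvd m' m \<longrightarrow> m' = m)}"

definition regular_seq :: "'a::comm_ring_1 list \<Rightarrow> bool" where
  "regular_seq fs =
     ((\<forall>i<length fs. \<forall>g. fs ! i * g \<in> gen_ideal (set (take i fs))
                          \<longrightarrow> g \<in> gen_ideal (set (take i fs)))
      \<and> gen_ideal (set fs) \<noteq> UNIV)"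

definition complete_intersection :: "'a::comm_ring_1 set \<Rightarrow> bool" where
  "complete_intersection J = (\<exists>fs. regular_seq fs \<and> J = gen_ideal (set fs))"

text \<open>I(x=1): substitute x = 1 in the (minimal monomial) generators of I.\<close>
definition subst_one :: "'v \<Rightarrow> ('v, 'k::field) mpoly set \<Rightarrow> ('v, 'k) mpoly set" where
  "subst_one x I = gen_ideal ((\<lambda>m. monom (Poly_Mapping.update x 0 m)) ` mingens I)"

definition nearly_complete_intersection :: "('v, 'k::field) mpoly set \<Rightarrow> bool" where
  "nearly_complete_intersection I =
     (sqfree_monomial_ideal I \<and> \<not> complete_intersection I \<and>
      (\<forall>x. (\<exists>m\<in>mingens I. x \<in> Poly_Mapping.keys m) \<longrightarrow> complete_intersection (subst_one x I)))"

end

theory Submission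
  imports Defs "HOL.Modules"
begin

(* A monomial ideal is a complete intersection exactly when its minimal generators have pairwise
   disjoint supports. Monomials with disjoint supports form a regular sequence. Conversely, if two
   minimal generators u and v share a variable, write both in terms of a regular sequence generating
   the ideal: the relation x^(v-u) u = x^(u-v) v becomes a syzygy of the sequence, so its
   coefficients lie in the ideal. As x^(v-u) is not in the ideal, the coefficients expressing u have
   no constant term, which is impossible for a minimal generator.

   Let the minimal generators of I be x^A for A in G, and h = x^H. Then (h) \<inter> K is h times the
   ideal generated by the x^(A - H) with A in G, A \<noteq> H. That I(x=1) is a complete intersection
   says that the minimal sets among the A - {x} are pairwise disjoint. Suppose two minimal residual
   sets A - H share a variable y. Using |H| \<ge> 2 one shows that H is minimal among the A - {y},
   that both residual sets are themselves members of G, and that they are then minimal among the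
   A - {x} for any x in H, contradicting disjointness. *)

section \<open>Monomial ideals\<close>

interpretation ideal: module "times :: 'a::comm_ring_1 \<Rightarrow> 'a \<Rightarrow> 'a"
  by standard (auto simp: algebra_simps)

(* As a simp rule, scale_scale reassociates products against mult.assoc and makes algebra_simps loop. *)
declare ideal.scale_scale [simp del]

lemma gen_ideal_eq_span: "gen_ideal S = ideal.span S"
  unfolding gen_ideal_def ideal.span_explicit by auto

lemma mdvd_refl [simp]: "mdvd a a"
  unfolding mdvd_def by simp

lemma mdvd_trans: "mdvd a b \<Longrightarrow> mdvd b c \<Longrightarrow> mdvd a c"
  unfolding mdvd_def using le_trans by blast

lemma mdvd_antisym: "mdvd a b \<Longrightarrow> mdvd b a \<Longrightarrow> a = b"
  unfolding mdvd_def by (rule poly_mapping_eqI) (meson antisym)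

lemma mdvd_add_right [simp]: "mdvd a (a + b)"
  unfolding mdvd_def by (simp add: lookup_add)

lemma mdvd_add_left [simp]: "mdvd b (a + b)"
  unfolding mdvd_def by (simp add: lookup_add)

lemma mdvd_minus_iff: "mdvd (s - h) q \<longleftrightarrow> mdvd s (h + q)"
  unfolding mdvd_def by (simp add: lookup_add lookup_minus le_diff_conv add.commute)

lemma add_minus_of_mdvd: "mdvd s t \<Longrightarrow> t - s + s = t"
  unfolding mdvd_def by (intro poly_mapping_eqI) (simp add: lookup_add lookup_minus)

lemma mdvd_zero_iff: "mdvd s 0 \<longleftrightarrow> s = 0"
  unfolding mdvd_def by (auto intro: poly_mapping_eqI)

lemma mdvd_minus_self: "mdvd (v - u) v"
  unfolding mdvd_def by (simp add: lookup_minus)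

lemma mdvd_minus_swap_imp_mdvd:
  assumes "mdvd (u - v) (v - u)"
  shows "mdvd u v"
  unfolding mdvd_def
proof
  fix z
  have "Poly_Mapping.lookup u z - Poly_Mapping.lookup v z \<le> Poly_Mapping.lookup v z - Poly_Mapping.lookup u z"
    using assms by (simp add: mdvd_def lookup_minus)
  then show "Poly_Mapping.lookup u z \<le> Poly_Mapping.lookup v z" by linarith
qed

lemma mdvd_minus_imp_disjnt:
  assumes "mdvd v (v - u)"
  shows "disjnt (Poly_Mapping.keys u) (Poly_Mapping.keys v)"
  unfolding disjnt_iff
proof (intro allI notI)
  fix z assume "z \<in> Poly_Mapping.keys u \<and> z \<in> Poly_Mapping.keys v"
  then have "Poly_Mapping.lookup (v - u) z < Poly_Mapping.lookup v z"
    by (simp add: lookup_minus in_keys_iff)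
  with assms show False unfolding mdvd_def by (meson not_le)
qed

lemma minus_add_swap: "(v - u) + u = (u - v) + (v :: 'a \<Rightarrow>\<^sub>0 nat)"
  by (rule poly_mapping_eqI) (simp add: lookup_add lookup_minus)

lemma mdvd_add_disjnt:
  assumes "disjnt (Poly_Mapping.keys s) (Poly_Mapping.keys a)" and "mdvd s (a + t)"
  shows "mdvd s t"
  unfolding mdvd_def
proof
  fix z
  have "Poly_Mapping.lookup s z \<le> Poly_Mapping.lookup a z + Poly_Mapping.lookup t z"
    using assms(2) by (simp add: mdvd_def lookup_add)
  moreover have "Poly_Mapping.lookup s z = 0 \<or> Poly_Mapping.lookup a z = 0"
    using assms(1) by (auto simp: disjnt_iff in_keys_iff)
  ultimately show "Poly_Mapping.lookup s z \<le> Poly_Mapping.lookup t z" by auto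
qed

lemma monom_mult: "monom a * monom b = (monom (a + b) :: ('v, 'k::field) mpoly)"
  unfolding monom_def by (simp add: mult_single)

lemma keys_monom [simp]: "Poly_Mapping.keys (monom a :: ('v, 'k::field) mpoly) = {a}"
  unfolding monom_def by simp

lemma lookup_monom_mult:
  "Poly_Mapping.lookup (monom a * g :: ('v, 'k::field) mpoly) (a + t) = Poly_Mapping.lookup g t"
  unfolding monom_def lookup_mult lookup_single by (simp add: when_mult)

lemma keys_monom_mult:
  "Poly_Mapping.keys (monom a * g :: ('v, 'k::field) mpoly) = (+) a ` Poly_Mapping.keys g"
proof
  show "Poly_Mapping.keys (monom a * g) \<subseteq> (+) a ` Poly_Mapping.keys g"
    using keys_mult[of "monom a" g] by auto
  show "(+) a ` Poly_Mapping.keys g \<subseteq> Poly_Mapping.keys (monom a * g)"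
    by (auto simp: in_keys_iff lookup_monom_mult)
qed

lemma poly_mapping_sum_single:
  "f = (\<Sum>t\<in>Poly_Mapping.keys f. Poly_Mapping.single t (Poly_Mapping.lookup f t))"
  by (rule poly_mapping_eqI)
    (simp add: lookup_sum lookup_single when_def in_keys_iff sum.If_cases)

lemma mem_monomial_ideal_iff:
  "(f :: ('v, 'k::field) mpoly) \<in> gen_ideal (monom ` S) \<longleftrightarrow>
     (\<forall>t\<in>Poly_Mapping.keys f. \<exists>s\<in>S. mdvd s t)"
proof
  assume "f \<in> gen_ideal (monom ` S)"
  then have "f \<in> ideal.span (monom ` S)" by (simp add: gen_ideal_eq_span)
  then show "\<forall>t\<in>Poly_Mapping.keys f. \<exists>s\<in>S. mdvd s t"
  proof (induction rule: ideal.span_induct_alt)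
    case (step c x y)
    then obtain s where "s \<in> S" "x = monom s" by blast
    then have "\<forall>t\<in>Poly_Mapping.keys (c * x). \<exists>s\<in>S. mdvd s t"
      unfolding mult.commute[of c] \<open>x = monom s\<close> keys_monom_mult
      using mdvd_add_right by blast
    then show ?case using keys_add[of "c * x" y] step.IH by blast
  qed simp
next
  assume divisible: "\<forall>t\<in>Poly_Mapping.keys f. \<exists>s\<in>S. mdvd s t"
  have "Poly_Mapping.single t c \<in> ideal.span (monom ` S)"
    if t: "t \<in> Poly_Mapping.keys f" for t and c :: 'k
  proof -
    obtain s where s: "s \<in> S" "mdvd s t" using divisible t by blast
    have "Poly_Mapping.single t c = Poly_Mapping.single (t - s) c * (monom s :: ('v, 'k) mpoly)"
      unfolding monom_def by (simp add: mult_single add_minus_of_mdvd[OF s(2)])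
    moreover have "monom s \<in> ideal.span (monom ` S)"
      using s(1) by (intro ideal.span_base imageI)
    ultimately show ?thesis by (metis ideal.span_scale)
  qed
  then have "(\<Sum>t\<in>Poly_Mapping.keys f. Poly_Mapping.single t (Poly_Mapping.lookup f t))
      \<in> ideal.span (monom ` S)"
    by (intro ideal.span_sum)
  then have "f \<in> ideal.span (monom ` S)"
    by (simp only: poly_mapping_sum_single[symmetric])
  then show "f \<in> gen_ideal (monom ` S)" by (simp add: gen_ideal_eq_span)
qed

lemma monom_mem_monomial_ideal_iff:
  "(monom t :: ('v, 'k::field) mpoly) \<in> gen_ideal (monom ` S) \<longleftrightarrow> (\<exists>s\<in>S. mdvd s t)"
  by (simp add: mem_monomial_ideal_iff)

lemma mingens_monomial_ideal:
  "m \<in> mingens (gen_ideal (monom ` S) :: ('v, 'k::field) mpoly set) \<longleftrightarrow>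
     m \<in> S \<and> (\<forall>s\<in>S. mdvd s m \<longrightarrow> s = m)"
proof
  assume "m \<in> mingens (gen_ideal (monom ` S) :: ('v, 'k) mpoly set)"
  then have "\<exists>s\<in>S. mdvd s m"
    and "\<And>m'. \<exists>s\<in>S. mdvd s m' \<Longrightarrow> mdvd m' m \<Longrightarrow> m' = m"
    unfolding mingens_def monom_mem_monomial_ideal_iff by blast+
  then show "m \<in> S \<and> (\<forall>s\<in>S. mdvd s m \<longrightarrow> s = m)"
    using mdvd_refl by blast
next
  assume m: "m \<in> S \<and> (\<forall>s\<in>S. mdvd s m \<longrightarrow> s = m)"
  have "m' = m" if "s \<in> S" "mdvd s m'" "mdvd m' m" for s m'
    using m that mdvd_trans[of s m' m] mdvd_antisym[of m' m] by auto
  then show "m \<in> mingens (gen_ideal (monom ` S) :: ('v, 'k) mpoly set)"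
    unfolding mingens_def monom_mem_monomial_ideal_iff using m mdvd_refl by blast
qed

lemma monomial_ideal_dominating_subset:
  assumes "S' \<subseteq> S" and "\<forall>s\<in>S. \<exists>s'\<in>S'. mdvd s' s"
  shows "gen_ideal (monom ` S') = (gen_ideal (monom ` S) :: ('v, 'k::field) mpoly set)"
proof -
  have "(\<exists>s'\<in>S'. mdvd s' t) \<longleftrightarrow> (\<exists>s\<in>S. mdvd s t)" for t
    using assms mdvd_trans by blast
  then show ?thesis by (simp add: set_eq_iff mem_monomial_ideal_iff)
qed

lemma principal_inter_monomial_ideal:
  "gen_ideal {monom h} \<inter> gen_ideal (monom ` S) =
     {monom h * j | j. j \<in> gen_ideal (monom ` (\<lambda>s. s - h) ` S :: ('v, 'k::field) mpoly set)}"
proof -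
  have principal: "gen_ideal {monom h} = range (\<lambda>j. monom h * j :: ('v, 'k) mpoly)"
    unfolding gen_ideal_eq_span ideal.span_singleton by (auto simp: mult.commute)
  have "monom h * j \<in> gen_ideal (monom ` S) \<longleftrightarrow> j \<in> gen_ideal (monom ` (\<lambda>s. s - h) ` S)"
    for j :: "('v, 'k) mpoly"
    by (simp add: mem_monomial_ideal_iff keys_monom_mult mdvd_minus_iff)
  then show ?thesis unfolding principal by blast
qed

section \<open>Monomial complete intersections\<close>

lemma gen_ideal_take_eq_sums:
  assumes "n \<le> length fs"
  shows "gen_ideal (set (take n fs)) = range (\<lambda>d. \<Sum>i<n. d i * fs ! i)"
proof
  show "gen_ideal (set (take n fs)) \<subseteq> range (\<lambda>d. \<Sum>i<n. d i * fs ! i)"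
  proof
    fix x assume "x \<in> gen_ideal (set (take n fs))"
    then have "x \<in> ideal.span (set (take n fs))" by (simp add: gen_ideal_eq_span)
    then show "x \<in> range (\<lambda>d. \<Sum>i<n. d i * fs ! i)"
    proof (induction rule: ideal.span_induct_alt)
      case base
      show ?case by (rule range_eqI[of _ _ "\<lambda>_. 0"]) simp
    next
      case (step c x y)
      obtain d where d: "y = (\<Sum>i<n. d i * fs ! i)" using step.IH by blast
      obtain k where k: "k < n" "x = fs ! k"
        using step.hyps assms by (auto simp: in_set_conv_nth)
      define d' where "d' i = d i + (if i = k then c else 0)" for i
      have "c * x + y = (\<Sum>i<n. d' i * fs ! i)"
        using k by (simp add: d d'_def distrib_right sum.distrib if_distrib[of "\<lambda>z. z * _"] cong: if_cong)
      then show ?case using rangeI[of "\<lambda>d. \<Sum>i<n. d i * fs ! i" d'] by simp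
    qed
  qed
  have "fs ! i \<in> set (take n fs)" if "i < n" for i
    using that assms nth_mem[of i "take n fs"] by simp
  then have "(\<Sum>i<n. d i * fs ! i) \<in> ideal.span (set (take n fs))" for d
    by (intro ideal.span_sum) (simp add: ideal.span_scale ideal.span_base)
  then show "range (\<lambda>d. \<Sum>i<n. d i * fs ! i) \<subseteq> gen_ideal (set (take n fs))"
    by (auto simp: gen_ideal_eq_span)
qed

lemma regular_seq_nonzerodivisor:
  "regular_seq fs \<Longrightarrow> i < length fs \<Longrightarrow> fs ! i * g \<in> gen_ideal (set (take i fs)) \<Longrightarrow>
     g \<in> gen_ideal (set (take i fs))"
  unfolding regular_seq_def by blast

lemma regular_seq_syzygy:
  assumes reg: "regular_seq fs"
    and "n \<le> length fs" and "(\<Sum>i<n. c i * fs ! i) = 0" and "i < n"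
  shows "c i \<in> gen_ideal (set (take n fs))"
  using assms(2-4)
proof (induction n arbitrary: c i)
  case (Suc n)
  let ?I = "gen_ideal (set (take n fs))" and ?I' = "gen_ideal (set (take (Suc n) fs))"
  have n: "n < length fs" using Suc.prems(1) by simp
  have sum0: "(\<Sum>i<n. c i * fs ! i) + c n * fs ! n = 0"
    using Suc.prems(2) by simp
  have "fs ! n * c n = - (\<Sum>i<n. c i * fs ! i)"
    using sum0 by (simp add: mult.commute eq_neg_iff_add_eq_0 add.commute)
  also have "\<dots> = (\<Sum>i<n. (- c i) * fs ! i)"
    by (simp add: sum_negf)
  also have "\<dots> \<in> ?I"
    unfolding gen_ideal_take_eq_sums[OF less_imp_le[OF n]] by (rule rangeI)
  finally have "fs ! n * c n \<in> ?I" .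
  then have cn: "c n \<in> ?I" using regular_seq_nonzerodivisor[OF reg n] by blast
  then obtain d where d: "c n = (\<Sum>i<n. d i * fs ! i)"
    unfolding gen_ideal_take_eq_sums[OF less_imp_le[OF n]] by blast
  define c' where "c' = (\<lambda>i. c i + d i * fs ! n)"
  have "(\<Sum>i<n. c' i * fs ! i) = (\<Sum>i<n. c i * fs ! i + fs ! n * (d i * fs ! i))"
    unfolding c'_def by (rule sum.cong) (simp_all add: algebra_simps)
  also have "\<dots> = (\<Sum>i<n. c i * fs ! i) + fs ! n * c n"
    unfolding d by (simp add: sum.distrib sum_distrib_left)
  also have "\<dots> = 0"
    using sum0 by (simp add: mult.commute)
  finally have c': "c' j \<in> ?I" if "j < n" for j
    using Suc.IH[of c' j] n that by simp
  have mono: "?I \<subseteq> ?I'"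
    unfolding gen_ideal_eq_span by (intro ideal.span_mono set_take_subset_set_take) simp
  have "fs ! n \<in> ?I'"
    unfolding gen_ideal_eq_span using n by (intro ideal.span_base) (simp add: take_Suc_conv_app_nth)
  then have "d i * fs ! n \<in> ?I'" for i
    unfolding gen_ideal_eq_span by (rule ideal.span_scale)
  then have "c' i - d i * fs ! n \<in> ?I'" if "i < n" for i
    using c' mono that unfolding gen_ideal_eq_span by (blast intro: ideal.span_diff)
  then show ?case
    using cn mono Suc.prems(3) unfolding c'_def by (cases "i = n") auto
qed simp

lemma constant_coeff_eq_zero_if_mem_monomial_ideal:
  assumes "monom a * p - monom b * q \<in> gen_ideal (monom ` S :: ('v, 'k::field) mpoly set)"
    and "\<not> (\<exists>s\<in>S. mdvd s a)" and "\<not> mdvd b a"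
  shows "Poly_Mapping.lookup p 0 = 0"
proof -
  have "a \<notin> Poly_Mapping.keys (monom a * p - monom b * q)"
    using assms(1,2) mem_monomial_ideal_iff by blast
  moreover have "a \<notin> Poly_Mapping.keys (monom b * q)"
    using assms(3) by (auto simp: keys_monom_mult)
  ultimately show ?thesis
    using lookup_monom_mult[of a p 0] by (simp add: in_keys_iff lookup_minus)
qed

lemma mingens_expansion_constant_coeff:
  assumes u: "u \<in> mingens (gen_ideal (monom ` S) :: ('v, 'k::field) mpoly set)"
    and gens: "\<forall>i<n. fs ! i \<in> gen_ideal (monom ` S)"
    and expansion: "monom u = (\<Sum>i<n. p i * fs ! i)"
  shows "\<exists>i<n. Poly_Mapping.lookup (p i) 0 \<noteq> 0"
proof -
  have "u \<in> Poly_Mapping.keys (\<Sum>i<n. p i * fs ! i)"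
    unfolding expansion[symmetric] by simp
  then obtain i where i: "i < n" "u \<in> Poly_Mapping.keys (p i * fs ! i)"
    using keys_sum[of "\<lambda>i. p i * fs ! i" "{..<n}"] by auto
  then obtain a b where ab: "u = a + b" "a \<in> Poly_Mapping.keys (p i)" "b \<in> Poly_Mapping.keys (fs ! i)"
    using keys_mult[of "p i" "fs ! i"] by blast
  obtain s where s: "s \<in> S" "mdvd s b"
    using gens i(1) ab(3) mem_monomial_ideal_iff by blast
  have "s = u"
    using u s ab(1) mdvd_trans[OF s(2) mdvd_add_left] by (simp add: mingens_monomial_ideal)
  then have "b = u"
    using s(2) ab(1) mdvd_add_left mdvd_antisym by blast
  then have "a = 0" using ab(1) by simp
  then show ?thesis using i(1) ab(2) by (auto simp: in_keys_iff)
qed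

lemma complete_intersection_mingens_disjnt:
  assumes "complete_intersection (gen_ideal (monom ` S) :: ('v, 'k::field) mpoly set)"
  shows "pairwise (\<lambda>u v. disjnt (Poly_Mapping.keys u) (Poly_Mapping.keys v))
           (mingens (gen_ideal (monom ` S) :: ('v, 'k) mpoly set))"
proof (rule pairwiseI, rule ccontr)
  let ?J = "gen_ideal (monom ` S) :: ('v, 'k) mpoly set"
  fix u v assume u: "u \<in> mingens ?J" and v: "v \<in> mingens ?J" and "u \<noteq> v"
    and overlap: "\<not> disjnt (Poly_Mapping.keys u) (Poly_Mapping.keys v)"
  obtain fs where reg: "regular_seq fs" and J: "?J = gen_ideal (set fs)"
    using assms unfolding complete_intersection_def by blast
  define n where "n = length fs"
  have sums: "?J = range (\<lambda>d. \<Sum>i<n. d i * fs ! i)"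
    using gen_ideal_take_eq_sums[of n fs] J by (simp add: n_def)
  have gens: "\<forall>i<n. fs ! i \<in> ?J"
    unfolding J by (auto intro: ideal.span_base simp: n_def gen_ideal_eq_span)
  have "monom u \<in> ?J" "monom v \<in> ?J"
    using u v by (auto simp: mingens_def)
  then obtain p q where p: "monom u = (\<Sum>i<n. p i * fs ! i)" and q: "monom v = (\<Sum>i<n. q i * fs ! i)"
    unfolding sums by blast
  \<comment> \<open>both products are the least common multiple of the two monomials\<close>
  have "(\<Sum>i<n. (monom (v - u) * p i - monom (u - v) * q i) * fs ! i)
      = monom (v - u) * monom u - monom (u - v) * monom v"
    unfolding p q by (simp add: left_diff_distrib sum_subtractf sum_distrib_left mult.assoc)
  also have "\<dots> = 0"
    by (simp add: monom_mult minus_add_swap)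
  finally have syzygy_coeffs: "monom (v - u) * p i - monom (u - v) * q i \<in> ?J" if "i < n" for i
    using regular_seq_syzygy[OF reg, of n] that J by (simp add: n_def)
  have "\<not> (\<exists>s\<in>S. mdvd s (v - u))"
  proof
    assume "\<exists>s\<in>S. mdvd s (v - u)"
    then obtain s where s: "s \<in> S" "mdvd s (v - u)" by blast
    then have "s = v"
      using v mdvd_trans[OF s(2) mdvd_minus_self] by (simp add: mingens_monomial_ideal)
    then show False
      using \<open>mdvd s (v - u)\<close> overlap mdvd_minus_imp_disjnt by blast
  qed
  moreover have "\<not> mdvd (u - v) (v - u)"
    using mdvd_minus_swap_imp_mdvd u v \<open>u \<noteq> v\<close> by (auto simp: mingens_monomial_ideal)
  ultimately have "Poly_Mapping.lookup (p i) 0 = 0" if "i < n" for i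
    using constant_coeff_eq_zero_if_mem_monomial_ideal syzygy_coeffs that by blast
  then show False
    using mingens_expansion_constant_coeff[OF u gens p] by blast
qed

lemma complete_intersection_disjnt_monomials:
  assumes "finite S" and "0 \<notin> S"
    and disjoint: "pairwise (\<lambda>u v. disjnt (Poly_Mapping.keys u) (Poly_Mapping.keys v)) S"
  shows "complete_intersection (gen_ideal (monom ` S) :: ('v, 'k::field) mpoly set)"
proof -
  obtain xs where xs: "set xs = S" "distinct xs"
    using finite_distinct_list[OF assms(1)] by blast
  define fs where "fs = map (monom :: _ \<Rightarrow> ('v, 'k) mpoly) xs"
  have take_fs: "set (take i fs) = monom ` set (take i xs)" for i
    unfolding fs_def take_map by simp
  have "g \<in> gen_ideal (set (take i fs))"
    if i: "i < length fs" and "fs ! i * g \<in> gen_ideal (set (take i fs))" for i g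
  proof -
    have xi: "xs ! i \<in> S" "xs ! i \<notin> set (take i xs)"
      using i xs by (auto simp: fs_def in_set_conv_nth nth_eq_iff_index_eq)
    have "monom (xs ! i) * g \<in> gen_ideal (monom ` set (take i xs))"
      using that by (simp add: fs_def take_map)
    then have "\<forall>t\<in>Poly_Mapping.keys g. \<exists>s\<in>set (take i xs). mdvd s (xs ! i + t)"
      by (simp add: mem_monomial_ideal_iff keys_monom_mult)
    moreover have "disjnt (Poly_Mapping.keys s) (Poly_Mapping.keys (xs ! i))"
      if s: "s \<in> set (take i xs)" for s
    proof -
      have "s \<in> S" "s \<noteq> xs ! i"
        using s xi(2) xs(1) set_take_subset[of i xs] by auto
      then show ?thesis using disjoint xi(1) by (simp add: pairwise_def)
    qed
    ultimately show ?thesis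
      unfolding take_fs mem_monomial_ideal_iff using mdvd_add_disjnt by blast
  qed
  moreover have "gen_ideal (set fs) \<noteq> UNIV"
  proof
    assume "gen_ideal (set fs) = UNIV"
    then have "monom 0 \<in> gen_ideal (monom ` S :: ('v, 'k) mpoly set)"
      using xs(1) by (simp add: fs_def)
    then show False using assms(2) by (auto simp: monom_mem_monomial_ideal_iff mdvd_zero_iff)
  qed
  ultimately have "regular_seq fs"
    unfolding regular_seq_def by blast
  then show ?thesis
    unfolding complete_intersection_def using xs(1) by (auto simp: fs_def)
qed

section \<open>Squarefree monomial ideals\<close>

definition sqfree_exp :: "'v::finite set \<Rightarrow> ('v \<Rightarrow>\<^sub>0 nat)" where
  "sqfree_exp A = Abs_poly_mapping (\<lambda>v. if v \<in> A then 1 else 0)"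

lemma lookup_sqfree_exp: "Poly_Mapping.lookup (sqfree_exp A) v = (if v \<in> A then 1 else 0)"
  unfolding sqfree_exp_def by simp

lemma keys_sqfree_exp [simp]: "Poly_Mapping.keys (sqfree_exp A) = A"
  by (auto simp: in_keys_iff lookup_sqfree_exp split: if_splits)

lemma sqfree_exp_eq_iff [simp]: "sqfree_exp A = sqfree_exp B \<longleftrightarrow> A = B"
  by (metis keys_sqfree_exp)

lemma sqfree_exp_keys:
  assumes "\<forall>v. Poly_Mapping.lookup m v \<le> 1"
  shows "sqfree_exp (Poly_Mapping.keys m) = m"
proof (rule poly_mapping_eqI)
  fix v
  have "Poly_Mapping.lookup m v \<le> 1" using assms by blast
  then show "Poly_Mapping.lookup (sqfree_exp (Poly_Mapping.keys m)) v = Poly_Mapping.lookup m v"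
    by (cases "Poly_Mapping.lookup m v") (auto simp: lookup_sqfree_exp in_keys_iff)
qed

lemma mdvd_sqfree_exp: "mdvd (sqfree_exp A) m \<longleftrightarrow> A \<subseteq> Poly_Mapping.keys m"
  unfolding mdvd_def lookup_sqfree_exp by (auto simp: in_keys_iff)

lemma sqfree_exp_minus: "sqfree_exp A - sqfree_exp B = sqfree_exp (A - B)"
  by (rule poly_mapping_eqI) (simp add: lookup_minus lookup_sqfree_exp)

lemma update_sqfree_exp: "Poly_Mapping.update x 0 (sqfree_exp A) = sqfree_exp (A - {x})"
  by (rule poly_mapping_eqI) (simp add: lookup_update lookup_sqfree_exp)

lemma mdeg_sqfree_exp: "mdeg (sqfree_exp A) = card A"
  unfolding mdeg_def by (simp add: lookup_sqfree_exp)

lemma sqfree_exp_eq_0_iff: "sqfree_exp A = 0 \<longleftrightarrow> A = {}"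
proof -
  have "sqfree_exp {} = 0" by (rule poly_mapping_eqI) (simp add: lookup_sqfree_exp)
  then show ?thesis by (metis sqfree_exp_eq_iff)
qed

lemma sqfree_monomial_idealE:
  fixes I :: "('v::finite, 'k::field) mpoly set"
  assumes "sqfree_monomial_ideal I"
  obtains F where "I = gen_ideal (monom ` sqfree_exp ` F)"
proof -
  obtain G where G: "\<forall>m\<in>G. \<forall>v. Poly_Mapping.lookup m v \<le> 1" "I = gen_ideal (monom ` G)"
    using assms unfolding sqfree_monomial_ideal_def by blast
  have "sqfree_exp ` Poly_Mapping.keys ` G = G"
    using G(1) sqfree_exp_keys by (force simp: image_image)
  then show thesis using that[of "Poly_Mapping.keys ` G"] G(2) by (simp only:)
qed

definition minimal_members :: "'a set set \<Rightarrow> 'a set set" where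
  "minimal_members F = {A \<in> F. \<forall>B\<in>F. B \<subseteq> A \<longrightarrow> B = A}"

lemma minimal_membersI: "A \<in> F \<Longrightarrow> (\<And>B. B \<in> F \<Longrightarrow> B \<subseteq> A \<Longrightarrow> B = A) \<Longrightarrow> A \<in> minimal_members F"
  unfolding minimal_members_def by blast

lemma minimal_membersD:
  "A \<in> minimal_members F \<Longrightarrow> A \<in> F"
  "A \<in> minimal_members F \<Longrightarrow> B \<in> F \<Longrightarrow> B \<subseteq> A \<Longrightarrow> B = A"
  unfolding minimal_members_def by blast+

lemma ex_minimal_member_subset:
  assumes "finite F" and "A \<in> F"
  shows "\<exists>M\<in>minimal_members F. M \<subseteq> A"
  using finite_has_minimal2[OF assms] unfolding minimal_members_def by blast

lemma mingens_sqfree_ideal: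
  "mingens (gen_ideal (monom ` sqfree_exp ` F) :: ('v::finite, 'k::field) mpoly set) =
     sqfree_exp ` minimal_members F"
proof (rule set_eqI)
  fix m
  show "m \<in> mingens (gen_ideal (monom ` sqfree_exp ` F) :: ('v, 'k) mpoly set) \<longleftrightarrow>
      m \<in> sqfree_exp ` minimal_members F"
  proof
    assume "m \<in> mingens (gen_ideal (monom ` sqfree_exp ` F) :: ('v, 'k) mpoly set)"
    then obtain A where A: "A \<in> F" "m = sqfree_exp A"
      and minimal: "\<forall>s\<in>sqfree_exp ` F. mdvd s m \<longrightarrow> s = m"
      unfolding mingens_monomial_ideal by blast
    have "A \<in> minimal_members F"
      using A minimal unfolding minimal_members_def by (auto simp: mdvd_sqfree_exp)
    then show "m \<in> sqfree_exp ` minimal_members F" using A(2) by blast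
  next
    assume "m \<in> sqfree_exp ` minimal_members F"
    then obtain A where "A \<in> minimal_members F" "m = sqfree_exp A" by blast
    then show "m \<in> mingens (gen_ideal (monom ` sqfree_exp ` F) :: ('v, 'k) mpoly set)"
      unfolding mingens_monomial_ideal minimal_members_def by (auto simp: mdvd_sqfree_exp)
  qed
qed

lemma gen_ideal_sqfree_minimal_members:
  "gen_ideal (monom ` sqfree_exp ` minimal_members F) =
     (gen_ideal (monom ` sqfree_exp ` F) :: ('v::finite, 'k::field) mpoly set)"
proof (rule monomial_ideal_dominating_subset)
  show "sqfree_exp ` minimal_members F \<subseteq> sqfree_exp ` F"
    unfolding minimal_members_def by blast
  show "\<forall>s\<in>sqfree_exp ` F. \<exists>s'\<in>sqfree_exp ` minimal_members F. mdvd s' s"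
  proof
    fix s assume "s \<in> sqfree_exp ` F"
    then obtain A where A: "A \<in> F" "s = sqfree_exp A" by blast
    obtain M where "M \<in> minimal_members F" "M \<subseteq> A"
      using ex_minimal_member_subset[OF _ A(1)] by auto
    then show "\<exists>s'\<in>sqfree_exp ` minimal_members F. mdvd s' s"
      using A(2) by (intro bexI[of _ "sqfree_exp M"]) (simp_all add: mdvd_sqfree_exp)
  qed
qed

lemma subst_one_sqfree:
  "subst_one x (gen_ideal (monom ` sqfree_exp ` F) :: ('v::finite, 'k::field) mpoly set) =
     gen_ideal (monom ` sqfree_exp ` (\<lambda>A. A - {x}) ` minimal_members F)"
  unfolding subst_one_def mingens_sqfree_ideal by (simp add: image_image update_sqfree_exp)

lemma principal_inter_sqfree_ideal:
  "gen_ideal {monom (sqfree_exp H)} \<inter> gen_ideal (monom ` sqfree_exp ` F) =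
     {monom (sqfree_exp H) * j | j.
       j \<in> gen_ideal (monom ` sqfree_exp ` (\<lambda>A. A - H) ` F :: ('v::finite, 'k::field) mpoly set)}"
  using principal_inter_monomial_ideal[of "sqfree_exp H" "sqfree_exp ` F"]
  by (simp add: image_image sqfree_exp_minus)

lemma complete_intersection_sqfree_imp_disjnt:
  assumes "complete_intersection (gen_ideal (monom ` sqfree_exp ` F) :: ('v::finite, 'k::field) mpoly set)"
  shows "pairwise disjnt (minimal_members F)"
  using complete_intersection_mingens_disjnt[OF assms]
  unfolding mingens_sqfree_ideal by (auto simp: pairwise_def)

lemma complete_intersection_sqfree:
  assumes "{} \<notin> F" and "pairwise disjnt (minimal_members F)"
  shows "complete_intersection (gen_ideal (monom ` sqfree_exp ` F) :: ('v::finite, 'k::field) mpoly set)"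
proof -
  have "complete_intersection (gen_ideal (monom ` sqfree_exp ` minimal_members F) :: ('v, 'k) mpoly set)"
  proof (rule complete_intersection_disjnt_monomials)
    show "0 \<notin> sqfree_exp ` minimal_members F"
      using assms(1) by (auto simp: sqfree_exp_eq_0_iff minimal_members_def)
    show "pairwise (\<lambda>u v. disjnt (Poly_Mapping.keys u) (Poly_Mapping.keys v)) (sqfree_exp ` minimal_members F)"
      using assms(2) by (auto simp: pairwise_def)
  qed simp
  then show ?thesis by (simp only: gen_ideal_sqfree_minimal_members)
qed

section \<open>Supports of a nearly complete intersection\<close>

(* G is the family of supports of the minimal generators and H the support of h. Then deletion x
   is the family of supports of the generators of I(x=1), and residuals is that of J. *)
locale nci_support_family =
  fixes G :: "'a set set" and H :: "'a set"
  assumes finite_G: "finite G"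
    and antichain: "A \<in> G \<Longrightarrow> B \<in> G \<Longrightarrow> B \<subseteq> A \<Longrightarrow> B = A"
    and H_in_G: "H \<in> G"
    and card_H: "2 \<le> card H"
    and deletion_disjnt: "x \<in> \<Union>G \<Longrightarrow> pairwise disjnt (minimal_members ((\<lambda>A. A - {x}) ` G))"
begin

abbreviation deletion :: "'a \<Rightarrow> 'a set set" where
  "deletion x \<equiv> (\<lambda>A. A - {x}) ` G"

abbreviation residuals :: "'a set set" where
  "residuals \<equiv> (\<lambda>A. A - H) ` (G - {H})"

lemma H_nonempty: "H \<noteq> {}"
  using card_H by auto

lemma H_not_subset_insert: "disjnt B H \<Longrightarrow> \<not> H \<subseteq> insert x B"
proof
  assume "disjnt B H" "H \<subseteq> insert x B"
  then have "H \<subseteq> {x}" by (auto simp: disjnt_def)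
  then have "card H \<le> 1" using card_mono[of "{x}" H] by simp
  with card_H show False by simp
qed

lemma empty_notin_residuals: "{} \<notin> residuals"
  using antichain[OF H_in_G] by blast

lemma minimal_residual_disjnt_H: "B \<in> minimal_members residuals \<Longrightarrow> disjnt B H"
  by (auto simp: minimal_members_def disjnt_def)

lemma H_minimal_deletion:
  assumes x: "x \<in> H"
  shows "H - {x} \<in> minimal_members (deletion x)"
proof (rule minimal_membersI)
  show "H - {x} \<in> deletion x" using H_in_G by blast
  fix C assume "C \<in> deletion x" "C \<subseteq> H - {x}"
  then obtain g where g: "g \<in> G" "C = g - {x}" "g \<subseteq> H" using x by blast
  then show "C = H - {x}" using antichain[OF H_in_G g(1)] by simp
qed

lemma residual_covered:
  assumes A: "A \<in> G" "A \<noteq> H"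
  shows "\<exists>x\<in>H. \<exists>g\<in>G. g \<subseteq> insert x (A - H)"
proof -
  obtain z where z: "z \<in> H" "z \<notin> A"
    using antichain[OF A(1) H_in_G] A(2) by blast
  obtain x where x: "x \<in> H" "x \<noteq> z"
    using H_not_subset_insert[of "{}" z] by auto
  obtain m where m: "m \<in> minimal_members (deletion x)" "m \<subseteq> A - {x}"
    using ex_minimal_member_subset[of "deletion x" "A - {x}"] finite_G A(1) by blast
  have "m \<noteq> H - {x}" using m(2) z x by blast
  moreover have "x \<in> \<Union>G" using x(1) H_in_G by blast
  ultimately have "disjnt m (H - {x})"
    using pairwiseD[OF deletion_disjnt m(1) H_minimal_deletion[OF x(1)]] by blast
  moreover obtain g where "g \<in> G" "m = g - {x}" using minimal_membersD(1)[OF m(1)] by blast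
  ultimately show ?thesis using m(2) x(1) by (auto simp: disjnt_def)
qed

lemma H_minimal_deletion_outside:
  assumes B1: "B1 \<in> minimal_members residuals" and B2: "B2 \<in> minimal_members residuals"
    and "B1 \<noteq> B2" and y: "y \<in> B1" "y \<in> B2"
  shows "H \<in> minimal_members (deletion y)"
proof (rule minimal_membersI)
  have "y \<notin> H" using minimal_residual_disjnt_H[OF B1] y(1) by (auto simp: disjnt_def)
  then show "H \<in> deletion y" using H_in_G by blast
  fix C assume "C \<in> deletion y" "C \<subseteq> H"
  then obtain g where g: "g \<in> G" "C = g - {y}" by blast
  show "C = H"
  proof (cases "y \<in> g")
    case False
    then show ?thesis using antichain[OF H_in_G g(1)] g(2) \<open>C \<subseteq> H\<close> by auto
  next
    case True
    then have "g - H \<in> residuals" using g(1) \<open>y \<notin> H\<close> by blast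
    moreover have "g - H \<subseteq> B1" "g - H \<subseteq> B2" using \<open>C \<subseteq> H\<close> g(2) y by blast+
    ultimately have "B1 = B2"
      using minimal_membersD(2)[OF B1] minimal_membersD(2)[OF B2] by metis
    with \<open>B1 \<noteq> B2\<close> show ?thesis by contradiction
  qed
qed

lemma minimal_residual_in_G:
  assumes B: "B \<in> minimal_members residuals" and y: "y \<in> B"
    and H_minimal: "H \<in> minimal_members (deletion y)"
  shows "B \<in> G"
proof -
  obtain A where A: "A \<in> G" "A \<noteq> H" "B = A - H" using minimal_membersD(1)[OF B] by blast
  obtain x g where x: "x \<in> H" and g: "g \<in> G" "g \<subseteq> insert x B"
    using residual_covered[OF A(1,2)] A(3) by blast
  obtain m where m: "m \<in> minimal_members (deletion y)" "m \<subseteq> g - {y}"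
    using ex_minimal_member_subset[of "deletion y" "g - {y}"] finite_G g(1) by blast
  have BH: "disjnt B H" by (rule minimal_residual_disjnt_H[OF B])
  have "m \<noteq> H" using m(2) g(2) H_not_subset_insert[OF BH, of x] by blast
  moreover have "y \<in> \<Union>G" using y A by blast
  ultimately have "disjnt m H" using pairwiseD[OF deletion_disjnt m(1) H_minimal] by blast
  then have "m \<subseteq> B" using m(2) g(2) x by (auto simp: disjnt_def)
  obtain g' where g': "g' \<in> G" "m = g' - {y}" using minimal_membersD(1)[OF m(1)] by blast
  have "g' \<subseteq> B" using \<open>m \<subseteq> B\<close> g'(2) y by blast
  then have "g' - H = g'" "g' \<noteq> H" using BH H_nonempty by (auto simp: disjnt_def)
  then have "g' - H \<in> residuals" using g'(1) by blast
  then have "g' - H = B" using minimal_membersD(2)[OF B] \<open>g' \<subseteq> B\<close> \<open>g' - H = g'\<close> by simp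
  then show ?thesis using g'(1) \<open>g' - H = g'\<close> by simp
qed

lemma minimal_residual_minimal_deletion:
  assumes x: "x \<in> H" and B: "B \<in> minimal_members residuals" and "B \<in> G"
  shows "B \<in> minimal_members (deletion x)"
proof (rule minimal_membersI)
  have BH: "disjnt B H" by (rule minimal_residual_disjnt_H[OF B])
  then have "B = B - {x}" using x by (auto simp: disjnt_def)
  then show "B \<in> deletion x" using \<open>B \<in> G\<close> by blast
  fix C assume "C \<in> deletion x" "C \<subseteq> B"
  then obtain g where g: "g \<in> G" "C = g - {x}" by blast
  show "C = B"
  proof (cases "x \<in> g")
    case False
    then show ?thesis using antichain[OF \<open>B \<in> G\<close> g(1)] g(2) \<open>C \<subseteq> B\<close> by auto
  next
    case True
    have "g \<noteq> H" using \<open>C \<subseteq> B\<close> g(2) H_not_subset_insert[OF BH, of x] by blast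
    then have "g - H \<in> residuals" using g(1) by blast
    moreover have "g - H \<subseteq> B" using \<open>C \<subseteq> B\<close> g(2) x by blast
    ultimately have "g - H = B" using minimal_membersD(2)[OF B] by blast
    then show ?thesis using \<open>C \<subseteq> B\<close> g(2) x by blast
  qed
qed

theorem pairwise_disjnt_minimal_residuals: "pairwise disjnt (minimal_members residuals)"
proof (rule pairwiseI)
  fix B1 B2
  assume B1: "B1 \<in> minimal_members residuals" and B2: "B2 \<in> minimal_members residuals"
    and "B1 \<noteq> B2"
  show "disjnt B1 B2"
  proof (rule ccontr)
    assume "\<not> disjnt B1 B2"
    then obtain y where y: "y \<in> B1" "y \<in> B2" by (auto simp: disjnt_def)
    have H_minimal: "H \<in> minimal_members (deletion y)"
      using H_minimal_deletion_outside[OF B1 B2 \<open>B1 \<noteq> B2\<close> y] .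
    obtain x where x: "x \<in> H" using H_nonempty by blast
    have "B1 \<in> minimal_members (deletion x)" "B2 \<in> minimal_members (deletion x)"
      using minimal_residual_minimal_deletion[OF x] minimal_residual_in_G[OF _ _ H_minimal] B1 B2 y
      by blast+
    moreover have "x \<in> \<Union>G" using x H_in_G by blast
    ultimately have "disjnt B1 B2" using pairwiseD[OF deletion_disjnt] \<open>B1 \<noteq> B2\<close> by blast
    with \<open>\<not> disjnt B1 B2\<close> show False by contradiction
  qed
qed

end

lemma nci_support_family_minimal_members:
  fixes F :: "'v::finite set set"
  assumes nci: "nearly_complete_intersection (gen_ideal (monom ` sqfree_exp ` F) :: ('v, 'k::field) mpoly set)"
    and "H \<in> minimal_members F" and "2 \<le> card H"
  shows "nci_support_family (minimal_members F) H"
proof unfold_locales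
  show "A \<in> minimal_members F \<Longrightarrow> B \<in> minimal_members F \<Longrightarrow> B \<subseteq> A \<Longrightarrow> B = A" for A B
    using minimal_membersD by metis
  show "pairwise disjnt (minimal_members ((\<lambda>A. A - {x}) ` minimal_members F))"
    if "x \<in> \<Union> (minimal_members F)" for x
  proof -
    let ?I = "gen_ideal (monom ` sqfree_exp ` F) :: ('v, 'k) mpoly set"
    have "\<exists>m\<in>mingens ?I. x \<in> Poly_Mapping.keys m"
      using that by (auto simp: mingens_sqfree_ideal)
    then have "complete_intersection (subst_one x ?I)"
      using nci unfolding nearly_complete_intersection_def by blast
    then show ?thesis
      unfolding subst_one_sqfree by (rule complete_intersection_sqfree_imp_disjnt)
  qed
qed (use assms(2,3) in simp_all)

theorem theorem4p4:
  fixes I :: "('v::finite, 'k::field) mpoly set" and h :: "'v \<Rightarrow>\<^sub>0 nat"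
  assumes "nearly_complete_intersection I"
    and "h \<in> mingens I"
    and "mdeg h \<ge> 3"
  shows "\<exists>J :: ('v, 'k) mpoly set. complete_intersection J \<and>
           gen_ideal {monom h} \<inter> gen_ideal (monom ` (mingens I - {h}))
             = {monom h * j | j. j \<in> J}"
proof -
  obtain F where I: "I = gen_ideal (monom ` sqfree_exp ` F)"
    using assms(1) sqfree_monomial_idealE unfolding nearly_complete_intersection_def by blast
  define G where "G = minimal_members F"
  have mingens_I: "mingens I = sqfree_exp ` G"
    unfolding I G_def by (rule mingens_sqfree_ideal)
  obtain H where H: "H \<in> G" "h = sqfree_exp H"
    using assms(2) mingens_I by blast
  interpret nci_support_family G H
    unfolding G_def using assms(1,3) H
    by (intro nci_support_family_minimal_members) (simp_all add: I G_def mdeg_sqfree_exp)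
  have "mingens I - {h} = sqfree_exp ` (G - {H})"
    unfolding mingens_I H(2) by auto
  then have "gen_ideal {monom h} \<inter> gen_ideal (monom ` (mingens I - {h})) =
      {monom h * j | j. j \<in> gen_ideal (monom ` sqfree_exp ` residuals)}"
    by (simp add: H(2) principal_inter_sqfree_ideal)
  moreover have "complete_intersection (gen_ideal (monom ` sqfree_exp ` residuals) :: ('v, 'k) mpoly set)"
    using complete_intersection_sqfree empty_notin_residuals pairwise_disjnt_minimal_residuals by blast
  ultimately show ?thesis by blast
qed

end
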